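(* For every $\epsilon>0$ there exists a constant $c_{\epsilon,1}>0$ (depending on $\epsilon$ but not on $m$) such that for every $n\ge1$, \[P\left(\max_{t\in[-1,1]}|D_n(t)-G_m(t)|>\epsilon\right)\le c_{\epsilon,1}\exp\left(-\frac{\epsilon^2}{2}n\right).\] In particular, $\lim_{n\to\infty}\max_{t\in[-1,1]}|D_n(t)-G_m(t)|=0$ $P$-a.s.
   Context: Fix $m>1/2$. Let $c_m:=\left(\int_{\mathbb R}(1+x^2)^{-m}dx\right)^{-1}$ and $\nu_m(dx):=c_m(1+x^2)^{-m}dx$. Let $(X_n)_{n\ge1}$ be i.i.d. random variables on $(\Omega,\mathcal F,P)$ with law $\nu_m$. Let $D(x,t):=\dfrac{x-t}{1+(x-t)^2}$ for $x,t\in\mathbb R$, $D_n(t):=\frac1n\sum_{i=1}^nD(X_i,t)$, and $G_m(t):=\int_{\mathbb R}D(x,t)\,\nu_m(dx)$. *)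

theory Defs
  imports "HOL-Probability.Probability"
begin

definition c_m :: "real \<Rightarrow> real" where
  "c_m m = 1 / (LBINT x. (1 + x\<^sup>2) powr (-m))"

definition nu_m :: "real \<Rightarrow> real measure" where
  "nu_m m = density lborel (\<lambda>x. ennreal (c_m m * (1 + x\<^sup>2) powr (-m)))"

definition D :: "real \<Rightarrow> real \<Rightarrow> real" where
  "D x t = (x - t) / (1 + (x - t)\<^sup>2)"

definition D_n :: "(nat \<Rightarrow> 'a \<Rightarrow> real) \<Rightarrow> nat \<Rightarrow> real \<Rightarrow> 'a \<Rightarrow> real" where
  "D_n X n t \<omega> = (1 / real n) * (\<Sum>i=1..n. D (X i \<omega>) t)"

definition G_m :: "real \<Rightarrow> real \<Rightarrow> real" where
  "G_m m t = (\<integral>x. D x t \<partial>nu_m m)"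

definition iid_nu :: "'a measure \<Rightarrow> real \<Rightarrow> (nat \<Rightarrow> 'a \<Rightarrow> real) \<Rightarrow> bool" where
  "iid_nu M m X \<longleftrightarrow> prob_space M \<and>
     (\<forall>i\<ge>1. X i \<in> borel_measurable M \<and> distr M borel (X i) = nu_m m) \<and>
     prob_space.indep_vars M (\<lambda>_. borel) X {1..}"

end

theory Submission
  imports Defs
begin

(* For every sample w, both t |-> D_n X n t w and G_m m are 1-Lipschitz and bounded by 1/2.
   So a deviation larger than e somewhere on [-1,1] forces a deviation of at least e/2 at some
   point of an e/4-grid of [-1,1], which has at most ceil(8/e) + 1 points. Hoeffding's
   inequality for the independent summands D (X i) s, which take values in [-1/2,1/2], bounds
   each of these grid events by 2 exp(-n e^2/2); a union bound gives the estimate, with a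
   constant that does not depend on m. The bounds are summable in n, so Borel-Cantelli gives
   almost sure convergence. *)

lemma measurable_D [measurable]: "(\<lambda>x. D x t) \<in> borel_measurable borel"
  unfolding D_def by measurable

lemma abs_D_le: "\<bar>D x t\<bar> \<le> 1/2"
proof -
  have "2 * \<bar>x - t\<bar> \<le> 1 + (x - t)\<^sup>2"
    using zero_le_power2[of "\<bar>x - t\<bar> - 1"] by (simp add: power2_diff)
  moreover have "0 < 1 + (x - t)\<^sup>2"
    by (simp add: add_pos_nonneg)
  ultimately show ?thesis
    unfolding D_def by (simp add: abs_divide divide_le_eq)
qed

lemma D_lipschitz: "\<bar>D x t - D x s\<bar> \<le> \<bar>t - s\<bar>"
proof -
  define u v where "u = x - t" and "v = x - s"
  have pu: "0 < 1 + u\<^sup>2" and pv: "0 < 1 + v\<^sup>2"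
    by (simp_all add: add_pos_nonneg)
  then have pos: "0 < (1 + u\<^sup>2) * (1 + v\<^sup>2)"
    by simp
  have diff: "D x t - D x s = (v - u) * (u * v - 1) / ((1 + u\<^sup>2) * (1 + v\<^sup>2))"
    unfolding D_def u_def[symmetric] v_def[symmetric] using pu pv
    by (simp add: field_simps power2_eq_square)
  have "2 * \<bar>u * v\<bar> \<le> u\<^sup>2 + v\<^sup>2"
    using zero_le_power2[of "\<bar>u\<bar> - \<bar>v\<bar>"] by (simp add: power2_diff abs_mult)
  moreover have "(1 + u\<^sup>2) * (1 + v\<^sup>2) = 1 + u\<^sup>2 + v\<^sup>2 + u\<^sup>2 * v\<^sup>2"
    by (simp add: algebra_simps)
  moreover have "\<bar>u * v - 1\<bar> \<le> \<bar>u * v\<bar> + 1"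
    using abs_triangle_ineq4[of "u * v" 1] by simp
  moreover have "0 \<le> u\<^sup>2 * v\<^sup>2"
    by simp
  ultimately have "\<bar>u * v - 1\<bar> \<le> (1 + u\<^sup>2) * (1 + v\<^sup>2)"
    using abs_ge_zero[of "u * v"] by linarith
  then have "\<bar>v - u\<bar> * \<bar>u * v - 1\<bar> / ((1 + u\<^sup>2) * (1 + v\<^sup>2)) \<le> \<bar>v - u\<bar>"
    using pos by (simp add: divide_le_eq mult_left_mono)
  then show ?thesis
    using pos by (simp add: diff abs_mult abs_divide u_def v_def)
qed

lemma abs_D_n_le: "\<bar>D_n X n t \<omega>\<bar> \<le> 1/2"
proof -
  have "\<bar>D_n X n t \<omega>\<bar> = (1 / real n) * \<bar>\<Sum>i=1..n. D (X i \<omega>) t\<bar>"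
    unfolding D_n_def by (simp add: abs_mult)
  also have "\<dots> \<le> (1 / real n) * (\<Sum>i=1..n. 1/2)"
    by (intro mult_left_mono order_trans[OF sum_abs] sum_mono abs_D_le) simp
  also have "\<dots> \<le> 1/2"
    by (cases "n = 0") simp_all
  finally show ?thesis .
qed

lemma D_n_lipschitz: "\<bar>D_n X n t \<omega> - D_n X n s \<omega>\<bar> \<le> \<bar>t - s\<bar>"
proof -
  have "\<bar>D_n X n t \<omega> - D_n X n s \<omega>\<bar> = (1 / real n) * \<bar>\<Sum>i=1..n. D (X i \<omega>) t - D (X i \<omega>) s\<bar>"
  proof -
    have "D_n X n t \<omega> - D_n X n s \<omega> = (1 / real n) * (\<Sum>i=1..n. D (X i \<omega>) t - D (X i \<omega>) s)"
      unfolding D_n_def by (simp add: sum_subtractf algebra_simps)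
    then show ?thesis
      by (simp add: abs_mult)
  qed
  also have "\<dots> \<le> (1 / real n) * (\<Sum>i=1..n. \<bar>t - s\<bar>)"
    by (intro mult_left_mono order_trans[OF sum_abs] sum_mono D_lipschitz) simp
  also have "\<dots> \<le> \<bar>t - s\<bar>"
    by (cases "n = 0") simp_all
  finally show ?thesis .
qed

lemma integrable_D:
  assumes "finite_measure N" "sets N = sets borel"
  shows "integrable N (\<lambda>x. D x t)"
proof -
  interpret finite_measure N by fact
  have "(\<lambda>x. D x t) \<in> borel_measurable N"
    by (simp add: measurable_cong_sets[OF assms(2) refl])
  then show ?thesis
    by (intro integrable_const_bound[where B = "1/2"] AE_I2) (use abs_D_le in auto)
qed

lemma abs_integral_D_le:
  assumes "prob_space N" "sets N = sets borel"
  shows "\<bar>\<integral>x. D x t \<partial>N\<bar> \<le> 1/2"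
proof -
  interpret prob_space N by fact
  have "\<bar>\<integral>x. D x t \<partial>N\<bar> \<le> (\<integral>x. \<bar>D x t\<bar> \<partial>N)"
    by (rule integral_abs_bound)
  also have "\<dots> \<le> (\<integral>x. 1/2 \<partial>N)"
    by (intro integral_mono integrable_abs integrable_D assms(2)) (use abs_D_le in auto)
  finally show ?thesis
    by (simp add: prob_space)
qed

lemma integral_D_lipschitz:
  assumes "prob_space N" "sets N = sets borel"
  shows "\<bar>(\<integral>x. D x t \<partial>N) - (\<integral>x. D x s \<partial>N)\<bar> \<le> \<bar>t - s\<bar>"
proof -
  interpret prob_space N by fact
  have "\<bar>(\<integral>x. D x t \<partial>N) - (\<integral>x. D x s \<partial>N)\<bar> = \<bar>\<integral>x. D x t - D x s \<partial>N\<bar>"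
    using integrable_D[OF _ assms(2)] by simp
  also have "\<dots> \<le> (\<integral>x. \<bar>D x t - D x s\<bar> \<partial>N)"
    by (rule integral_abs_bound)
  also have "\<dots> \<le> (\<integral>x. \<bar>t - s\<bar> \<partial>N)"
    by (intro integral_mono integrable_abs Bochner_Integration.integrable_diff integrable_D assms(2))
      (simp_all add: D_lipschitz)
  finally show ?thesis
    by (simp add: prob_space)
qed

definition grid :: "real \<Rightarrow> real \<Rightarrow> real \<Rightarrow> real set" where
  "grid a b d = (\<lambda>k. a + real k * d) ` {0..nat \<lceil>(b - a) / d\<rceil>}"

lemma finite_grid: "finite (grid a b d)"
  unfolding grid_def by simp

lemma card_grid_le: "card (grid a b d) \<le> nat \<lceil>(b - a) / d\<rceil> + 1"
  unfolding grid_def using card_image_le[of "{0..nat \<lceil>(b - a) / d\<rceil>}"] by simp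

lemma grid_dense:
  assumes "d > 0" "t \<in> {a..b}"
  shows "\<exists>s\<in>grid a b d. \<bar>t - s\<bar> \<le> d"
proof -
  define k where "k = nat \<lfloor>(t - a) / d\<rfloor>"
  have k: "real k = \<lfloor>(t - a) / d\<rfloor>"
    using assms by (simp add: k_def)
  have "real k \<le> (t - a) / d" "(t - a) / d < real k + 1"
    unfolding k by linarith+
  then have "real k * d \<le> t - a" "t - a < real k * d + d"
    using assms by (simp_all add: pos_le_divide_eq pos_divide_less_eq algebra_simps)
  moreover have "k \<le> nat \<lceil>(b - a) / d\<rceil>"
    unfolding k_def using assms
    by (intro nat_mono order_trans[OF floor_mono floor_le_ceiling]) (simp add: divide_right_mono)
  then have "a + real k * d \<in> grid a b d"
    unfolding grid_def by (intro imageI) simp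
  ultimately show ?thesis
    by force
qed

lemma grid_point_of_SUP_gt:
  fixes F G :: "real \<Rightarrow> real"
  assumes F: "\<And>t s. \<bar>F t - F s\<bar> \<le> \<bar>t - s\<bar>" and G: "\<And>t s. \<bar>G t - G s\<bar> \<le> \<bar>t - s\<bar>"
    and bdd: "bdd_above ((\<lambda>t. \<bar>F t - G t\<bar>) ` {a..b})" and "a \<le> b" "e > 0"
    and gt: "(SUP t\<in>{a..b}. \<bar>F t - G t\<bar>) > e"
  shows "\<exists>s\<in>grid a b (e/4). \<bar>F s - G s\<bar> \<ge> e/2"
proof -
  obtain t where t: "t \<in> {a..b}" "\<bar>F t - G t\<bar> > e"
    using gt less_cSUP_iff[OF _ bdd] \<open>a \<le> b\<close> by auto
  have "\<exists>s\<in>grid a b (e/4). \<bar>t - s\<bar> \<le> e/4"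
    using \<open>e > 0\<close> t(1) by (intro grid_dense) simp_all
  then obtain s where s: "s \<in> grid a b (e/4)" "\<bar>t - s\<bar> \<le> e/4" ..
  have "\<bar>F s - G s\<bar> \<ge> e/2"
    using F[of t s] G[of t s] t(2) s(2) by linarith
  with s(1) show ?thesis ..
qed

context prob_space
begin

lemma Hoeffding_empirical_mean:
  fixes X :: "nat \<Rightarrow> 'a \<Rightarrow> real" and f :: "real \<Rightarrow> real"
  assumes indep: "indep_vars (\<lambda>_. borel) X {1..n}"
    and law: "\<And>i. i \<in> {1..n} \<Longrightarrow> distr M borel (X i) = N"
    and f [measurable]: "f \<in> borel_measurable borel" and range_f: "\<And>x. f x \<in> {a..b}"
    and "a < b" "n \<ge> 1" "r \<ge> 0"
  shows "prob {\<omega>\<in>space M. \<bar>(1 / real n) * (\<Sum>i=1..n. f (X i \<omega>)) - (\<integral>x. f x \<partial>N)\<bar> \<ge> r}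
           \<le> 2 * exp (-2 * real n * r\<^sup>2 / (b - a)\<^sup>2)"
proof -
  define Y where "Y i \<omega> = f (X i \<omega>)" for i \<omega>
  have X_meas: "X i \<in> borel_measurable M" if "i \<in> {1..n}" for i
    using indep that unfolding indep_vars_def by blast
  have mean_Y: "expectation (Y i) = (\<integral>x. f x \<partial>N)" if "i \<in> {1..n}" for i
    unfolding Y_def law[OF that, symmetric] using X_meas[OF that] by (simp add: integral_distr)
  interpret Hoeffding_ineq M "{1..n}" Y "\<lambda>_. a" "\<lambda>_. b" "\<Sum>i\<in>{1..n}. expectation (Y i)"
  proof unfold_locales
    show "indep_vars (\<lambda>_. borel) Y {1..n}"
      unfolding Y_def using indep by (rule indep_vars_compose2) simp
    fix i
    show "AE \<omega> in M. Y i \<omega> \<in> {a..b}"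
      unfolding Y_def using range_f by simp
  qed simp
  have "{\<omega>\<in>space M. \<bar>(1 / real n) * (\<Sum>i=1..n. f (X i \<omega>)) - (\<integral>x. f x \<partial>N)\<bar> \<ge> r}
      = {\<omega>\<in>space M. \<bar>(\<Sum>i\<in>{1..n}. Y i \<omega>) - (\<Sum>i\<in>{1..n}. expectation (Y i))\<bar> \<ge> real n * r}"
  proof -
    have "(\<Sum>i\<in>{1..n}. Y i \<omega>) - (\<Sum>i\<in>{1..n}. expectation (Y i))
        = real n * ((1 / real n) * (\<Sum>i=1..n. f (X i \<omega>)) - (\<integral>x. f x \<partial>N))" for \<omega>
      using \<open>n \<ge> 1\<close> by (simp add: mean_Y Y_def field_simps)
    then show ?thesis
      using \<open>n \<ge> 1\<close> by (simp add: abs_mult)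
  qed
  also have "prob \<dots> \<le> 2 * exp (-2 * (real n * r)\<^sup>2 / (\<Sum>i\<in>{1..n}. (b - a)\<^sup>2))"
    using \<open>a < b\<close> \<open>n \<ge> 1\<close> \<open>r \<ge> 0\<close> by (intro Hoeffding_ineq_abs_ge) simp_all
  also have "\<dots> = 2 * exp (-2 * real n * r\<^sup>2 / (b - a)\<^sup>2)"
    using \<open>n \<ge> 1\<close> by (simp add: power2_eq_square)
  finally show ?thesis .
qed

lemma AE_tendsto_0_if_summable_exceptions:
  fixes S :: "nat \<Rightarrow> 'a \<Rightarrow> real"
  assumes nonneg: "\<And>n \<omega>. \<omega> \<in> space M \<Longrightarrow> 0 \<le> S n \<omega>"
    and exceptions: "\<And>e. e > 0 \<Longrightarrow> \<exists>A. (\<forall>n. A n \<in> events) \<and> summable (\<lambda>n. prob (A n)) \<and>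
                                    (\<forall>n. \<forall>\<omega>\<in>space M - A n. S n \<omega> \<le> e)"
  shows "AE \<omega> in M. (\<lambda>n. S n \<omega>) \<longlonglongrightarrow> 0"
proof -
  have "\<forall>k::nat. \<exists>A. (\<forall>n. A n \<in> events) \<and> summable (\<lambda>n. prob (A n)) \<and>
                    (\<forall>n. \<forall>\<omega>\<in>space M - A n. S n \<omega> \<le> 1 / Suc k)"
    using exceptions by simp
  then obtain A where A_events: "\<And>k n. A k n \<in> events"
    and A_summable: "\<And>k. summable (\<lambda>n. prob (A k n))"
    and A_small: "\<And>k n \<omega>. \<omega> \<in> space M - A k n \<Longrightarrow> S n \<omega> \<le> 1 / Suc k"
    by metis
  have "AE \<omega> in M. \<forall>k. eventually (\<lambda>n. \<omega> \<in> space M - A k n) sequentially"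
    unfolding AE_all_countable
    by (intro allI borel_cantelli_AE1 A_events A_summable) (simp add: less_top[symmetric])
  with AE_space show ?thesis
  proof eventually_elim
    case (elim \<omega>)
    show ?case
    proof (rule order_tendstoI)
      fix y :: real
      assume "y < 0"
      then have "y < S n \<omega>" for n
        using nonneg[OF \<open>\<omega> \<in> space M\<close>, of n] by linarith
      then show "eventually (\<lambda>n. y < S n \<omega>) sequentially"
        by simp
    next
      fix y :: real
      assume "y > 0"
      then obtain k where k: "1 / Suc k < y"
        using nat_approx_posE by blast
      from elim have "eventually (\<lambda>n. \<omega> \<in> space M - A k n) sequentially"
        by blast
      then show "eventually (\<lambda>n. S n \<omega> < y) sequentially"
        by (rule eventually_mono) (use A_small k in fastforce)
    qed
  qed
qed

end

locale iid_sample =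
  fixes M :: "'a measure" and m :: real and X :: "nat \<Rightarrow> 'a \<Rightarrow> real"
  assumes iid: "iid_nu M m X"
begin

sublocale prob_space M
  using iid by (simp add: iid_nu_def)

lemma measurable_sample: "i \<ge> 1 \<Longrightarrow> X i \<in> borel_measurable M"
  using iid by (simp add: iid_nu_def)

lemma measurable_D_n [measurable]: "(\<lambda>\<omega>. D_n X n t \<omega>) \<in> borel_measurable M"
  unfolding D_n_def using measurable_sample by measurable

lemma prob_space_nu_m: "prob_space (nu_m m)"
  using iid prob_space_distr[OF measurable_sample[of 1]] by (simp add: iid_nu_def)

lemma sets_nu_m: "sets (nu_m m) = sets borel"
  by (simp add: nu_m_def)

lemma abs_G_m_le: "\<bar>G_m m t\<bar> \<le> 1/2"
  unfolding G_m_def by (rule abs_integral_D_le[OF prob_space_nu_m sets_nu_m])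

lemma G_m_lipschitz: "\<bar>G_m m t - G_m m s\<bar> \<le> \<bar>t - s\<bar>"
  unfolding G_m_def by (rule integral_D_lipschitz[OF prob_space_nu_m sets_nu_m])

lemma prob_deviation_ge:
  assumes "n \<ge> 1" "r \<ge> 0"
  shows "prob {\<omega>\<in>space M. \<bar>D_n X n t \<omega> - G_m m t\<bar> \<ge> r} \<le> 2 * exp (-2 * real n * r\<^sup>2)"
proof -
  have "indep_vars (\<lambda>_. borel) X {1..n}"
    using iid indep_vars_subset[of _ X "{1..}" "{1..n}"] by (auto simp: iid_nu_def)
  moreover have "distr M borel (X i) = nu_m m" if "i \<in> {1..n}" for i
    using iid that by (simp add: iid_nu_def)
  moreover have "D x t \<in> {-1/2..1/2}" for x
    using abs_D_le[of x t] by (auto simp: abs_le_iff)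
  ultimately have "prob {\<omega>\<in>space M. \<bar>(1 / real n) * (\<Sum>i=1..n. D (X i \<omega>) t) - (\<integral>x. D x t \<partial>nu_m m)\<bar> \<ge> r}
      \<le> 2 * exp (-2 * real n * r\<^sup>2 / (1/2 - (-1/2))\<^sup>2)"
    using assms by (intro Hoeffding_empirical_mean) simp_all
  then show ?thesis
    by (simp add: D_n_def G_m_def)
qed

lemma bdd_above_deviation: "bdd_above ((\<lambda>t. \<bar>D_n X n t \<omega> - G_m m t\<bar>) ` T)"
proof (rule bdd_aboveI2)
  show "\<bar>D_n X n t \<omega> - G_m m t\<bar> \<le> 1" for t
    using abs_D_n_le[of X n t \<omega>] abs_G_m_le[of t] by linarith
qed

lemma sup_deviation_nonneg: "0 \<le> (SUP t\<in>{-1..1}. \<bar>D_n X n t \<omega> - G_m m t\<bar>)"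
  by (rule cSUP_upper2[OF bdd_above_deviation, of 0]) simp_all

definition grid_deviation_event :: "real \<Rightarrow> nat \<Rightarrow> 'a set" where
  "grid_deviation_event e n =
     (\<Union>s\<in>grid (-1) 1 (e/4). {\<omega>\<in>space M. \<bar>D_n X n s \<omega> - G_m m s\<bar> \<ge> e/2})"

lemma grid_deviation_event_in_events: "grid_deviation_event e n \<in> events"
  unfolding grid_deviation_event_def using finite_grid by (intro sets.finite_UN) simp_all

lemma sup_deviation_le_outside_grid_deviation_event:
  assumes "e > 0" "\<omega> \<in> space M - grid_deviation_event e n"
  shows "(SUP t\<in>{-1..1}. \<bar>D_n X n t \<omega> - G_m m t\<bar>) \<le> e"
  using grid_point_of_SUP_gt[OF D_n_lipschitz G_m_lipschitz bdd_above_deviation, of "-1" 1 e] assms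
  by (force simp: grid_deviation_event_def)

lemma prob_grid_deviation_event_le:
  assumes "e > 0" "n \<ge> 1"
  shows "prob (grid_deviation_event e n) \<le> 2 * (real (nat \<lceil>8/e\<rceil>) + 1) * exp (-(e\<^sup>2 / 2) * real n)"
proof -
  have "prob (grid_deviation_event e n)
      \<le> (\<Sum>s\<in>grid (-1) 1 (e/4). prob {\<omega>\<in>space M. \<bar>D_n X n s \<omega> - G_m m s\<bar> \<ge> e/2})"
    unfolding grid_deviation_event_def by (intro finite_measure_subadditive_finite finite_grid) auto
  also have "\<dots> \<le> (\<Sum>s\<in>grid (-1) 1 (e/4). 2 * exp (-2 * real n * (e/2)\<^sup>2))"
    using \<open>e > 0\<close> by (intro sum_mono prob_deviation_ge[OF \<open>n \<ge> 1\<close>]) simp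
  also have "\<dots> = (\<Sum>s\<in>grid (-1) 1 (e/4). 2 * exp (-(e\<^sup>2 / 2) * real n))"
    by (simp add: power2_eq_square)
  also have "\<dots> \<le> (real (nat \<lceil>8/e\<rceil>) + 1) * (2 * exp (-(e\<^sup>2 / 2) * real n))"
    using card_grid_le[of "-1" 1 "e/4"] by (simp add: mult_right_mono)
  finally show ?thesis
    by (simp add: algebra_simps)
qed

lemma summable_prob_grid_deviation_event:
  assumes "e > 0"
  shows "summable (\<lambda>n. prob (grid_deviation_event e n))"
proof (rule summable_comparison_test')
  define c where "c = 2 * (real (nat \<lceil>8/e\<rceil>) + 1)"
  show "summable (\<lambda>n. c * exp (-(e\<^sup>2 / 2)) ^ n)"
    using assms by (intro summable_mult summable_geometric) simp
  show "norm (prob (grid_deviation_event e n)) \<le> c * exp (-(e\<^sup>2 / 2)) ^ n" if "n \<ge> 1" for n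
    using prob_grid_deviation_event_le[OF assms that]
    by (simp add: c_def mult.commute flip: exp_of_nat_mult)
qed

lemma prob_sup_deviation_gt:
  assumes "e > 0" "n \<ge> 1"
  shows "prob {\<omega>\<in>space M. (SUP t\<in>{-1..1}. \<bar>D_n X n t \<omega> - G_m m t\<bar>) > e}
           \<le> 2 * (real (nat \<lceil>8/e\<rceil>) + 1) * exp (-(e\<^sup>2 / 2) * real n)"
proof -
  have "{\<omega>\<in>space M. (SUP t\<in>{-1..1}. \<bar>D_n X n t \<omega> - G_m m t\<bar>) > e} \<subseteq> grid_deviation_event e n"
    using sup_deviation_le_outside_grid_deviation_event[OF \<open>e > 0\<close>] by force
  then have "prob {\<omega>\<in>space M. (SUP t\<in>{-1..1}. \<bar>D_n X n t \<omega> - G_m m t\<bar>) > e}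
      \<le> prob (grid_deviation_event e n)"
    by (rule finite_measure_mono[OF _ grid_deviation_event_in_events])
  with prob_grid_deviation_event_le[OF assms] show ?thesis
    by linarith
qed

lemma AE_sup_deviation_tendsto_0:
  "AE \<omega> in M. (\<lambda>n. SUP t\<in>{-1..1}. \<bar>D_n X n t \<omega> - G_m m t\<bar>) \<longlonglongrightarrow> 0"
proof (rule AE_tendsto_0_if_summable_exceptions)
  fix e :: real
  assume "e > 0"
  then show "\<exists>A. (\<forall>n. A n \<in> events) \<and> summable (\<lambda>n. prob (A n)) \<and>
      (\<forall>n. \<forall>\<omega>\<in>space M - A n. (SUP t\<in>{-1..1}. \<bar>D_n X n t \<omega> - G_m m t\<bar>) \<le> e)"
    using grid_deviation_event_in_events summable_prob_grid_deviation_event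
      sup_deviation_le_outside_grid_deviation_event
    by blast
qed (rule sup_deviation_nonneg)

end

theorem lemma3p1:
  shows "(\<forall>\<epsilon>>0. \<exists>c>0. \<forall>m::real. \<forall>(M::'a measure) X. m > 1/2 \<longrightarrow> iid_nu M m X \<longrightarrow>
            (\<forall>n::nat\<ge>1. measure M {\<omega>\<in>space M. (SUP t\<in>{-1..1}. \<bar>D_n X n t \<omega> - G_m m t\<bar>) > \<epsilon>}
                \<le> c * exp (-(\<epsilon>\<^sup>2 / 2) * real n)))
     \<and> (\<forall>m::real. \<forall>(M::'a measure) X. m > 1/2 \<longrightarrow> iid_nu M m X \<longrightarrow>
            (AE \<omega> in M. (\<lambda>n. SUP t\<in>{-1..1}. \<bar>D_n X n t \<omega> - G_m m t\<bar>) \<longlonglongrightarrow> 0))"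
proof (intro conjI allI impI)
  fix \<epsilon> :: real
  assume "\<epsilon> > 0"
  show "\<exists>c>0. \<forall>m::real. \<forall>(M::'a measure) X. m > 1/2 \<longrightarrow> iid_nu M m X \<longrightarrow>
            (\<forall>n::nat\<ge>1. measure M {\<omega>\<in>space M. (SUP t\<in>{-1..1}. \<bar>D_n X n t \<omega> - G_m m t\<bar>) > \<epsilon>}
                \<le> c * exp (-(\<epsilon>\<^sup>2 / 2) * real n))"
  proof (intro exI[of _ "2 * (real (nat \<lceil>8/\<epsilon>\<rceil>) + 1)"] conjI allI impI)
    fix m :: real and M :: "'a measure" and X and n :: nat
    assume "iid_nu M m X" "n \<ge> 1"
    then interpret iid_sample M m X
      by (intro iid_sample.intro)
    show "measure M {\<omega>\<in>space M. (SUP t\<in>{-1..1}. \<bar>D_n X n t \<omega> - G_m m t\<bar>) > \<epsilon>}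
        \<le> 2 * (real (nat \<lceil>8/\<epsilon>\<rceil>) + 1) * exp (-(\<epsilon>\<^sup>2 / 2) * real n)"
      by (rule prob_sup_deviation_gt[OF \<open>\<epsilon> > 0\<close> \<open>n \<ge> 1\<close>])
  qed simp
next
  fix m :: real and M :: "'a measure" and X
  assume "iid_nu M m X"
  then show "AE \<omega> in M. (\<lambda>n. SUP t\<in>{-1..1}. \<bar>D_n X n t \<omega> - G_m m t\<bar>) \<longlonglongrightarrow> 0"
    by (rule iid_sample.AE_sup_deviation_tendsto_0[OF iid_sample.intro])
qed

end
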